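(* Let $G=(V,E,\omega)\in\mathcal G$, $\gamma\geq0$, and $\tau>0$. If $S^0\subset V$ and $\{S^k\}_{k=1}^N$ ($N\in\mathbb N\cup\{\infty\}$) is a sequence generated by the OKMBO scheme, then there is $K\geq0$ such that $S^k=S^K$ for all $k\geq K$.
   Context: $\mathcal{G}$ is the set of finite, simple, connected, undirected, edge-weighted graphs $G=(V,E,\omega)$ with $V=\{1,\dots,n\}$, $n\geq2$, weights $\omega_{ij}=\omega_{ji}>0$ on edges, $0$ otherwise. $d_i=\sum_j\omega_{ij}$. $\mathcal V$: functions $V\to\mathbb R$. Fixed $r\in[0,1]$: $(\Delta u)_i=d_i^{-r}\sum_j\omega_{ij}(u_i-u_j)$, $\mathcal M(u)=\sum_id_i^ru_i$, $\mathcal A(u)=\frac{\mathcal M(u)}{\sum_id_i^r}\chi_V$ ($\chi_S$ indicator of $S$). For $u\in\mathcal V$ let $\varphi$ be the unique solution of $\Delta\varphi=u-\mathcal A(u)$, $\mathcal M(\varphi)=0$, and $Lu:=\Delta u+\gamma\varphi$. OKMBO scheme: given $S^0\subset V$, for $k=1,\dots,N$ let $u=e^{-\tau L}\chi_{S^{k-1}}$ (the time-$\tau$ solution of $du/dt=-Lu$, $u(0)=\chi_{S^{k-1}}$) and $S^k=\{i\in V:u_i\geq\frac12\}$. *)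

theory Defs
  imports Complex_Main "HOL-Library.Extended_Nat"
begin

text \<open>Vertex set V = {1..n}; weights w :: nat => nat => real (only values on V matter);
  vertex functions are nat => real (only values on V matter).\<close>

definition edge_rel :: "nat \<Rightarrow> (nat \<Rightarrow> nat \<Rightarrow> real) \<Rightarrow> (nat \<times> nat) set" where
  "edge_rel n w = {(a, b). a \<in> {1..n} \<and> b \<in> {1..n} \<and> w a b > 0}"

definition wgraph :: "nat \<Rightarrow> (nat \<Rightarrow> nat \<Rightarrow> real) \<Rightarrow> bool" where
  "wgraph n w \<longleftrightarrow> 2 \<le> n
     \<and> (\<forall>i\<in>{1..n}. \<forall>j\<in>{1..n}. w i j = w j i \<and> w i j \<ge> 0)
     \<and> (\<forall>i\<in>{1..n}. w i i = 0)
     \<and> (\<forall>i\<in>{1..n}. \<forall>j\<in>{1..n}. (i, j) \<in> (edge_rel n w)\<^sup>*)"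

definition deg :: "nat \<Rightarrow> (nat \<Rightarrow> nat \<Rightarrow> real) \<Rightarrow> nat \<Rightarrow> real" where
  "deg n w i = (\<Sum>j\<in>{1..n}. w i j)"

definition glap :: "nat \<Rightarrow> (nat \<Rightarrow> nat \<Rightarrow> real) \<Rightarrow> real \<Rightarrow> (nat \<Rightarrow> real) \<Rightarrow> nat \<Rightarrow> real" where
  "glap n w r u i = deg n w i powr (-r) * (\<Sum>j\<in>{1..n}. w i j * (u i - u j))"

definition gmass :: "nat \<Rightarrow> (nat \<Rightarrow> nat \<Rightarrow> real) \<Rightarrow> real \<Rightarrow> (nat \<Rightarrow> real) \<Rightarrow> real" where
  "gmass n w r u = (\<Sum>i\<in>{1..n}. deg n w i powr r * u i)"

definition gavg :: "nat \<Rightarrow> (nat \<Rightarrow> nat \<Rightarrow> real) \<Rightarrow> real \<Rightarrow> (nat \<Rightarrow> real) \<Rightarrow> nat \<Rightarrow> real" where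
  "gavg n w r u = (\<lambda>i. if i \<in> {1..n} then gmass n w r u / (\<Sum>j\<in>{1..n}. deg n w j powr r) else 0)"

definition gpot :: "nat \<Rightarrow> (nat \<Rightarrow> nat \<Rightarrow> real) \<Rightarrow> real \<Rightarrow> (nat \<Rightarrow> real) \<Rightarrow> nat \<Rightarrow> real" where
  "gpot n w r u = (THE \<phi>. (\<forall>i\<in>{1..n}. glap n w r \<phi> i = u i - gavg n w r u i)
                      \<and> gmass n w r \<phi> = 0 \<and> (\<forall>i. i \<notin> {1..n} \<longrightarrow> \<phi> i = 0))"

definition Lop :: "nat \<Rightarrow> (nat \<Rightarrow> nat \<Rightarrow> real) \<Rightarrow> real \<Rightarrow> real \<Rightarrow> (nat \<Rightarrow> real) \<Rightarrow> nat \<Rightarrow> real" where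
  "Lop n w r \<gamma> u = (\<lambda>i. glap n w r u i + \<gamma> * gpot n w r u i)"

text \<open>e^{-tau L} v, via the exponential series (L is linear on the finite-dimensional space).\<close>
definition heat :: "nat \<Rightarrow> (nat \<Rightarrow> nat \<Rightarrow> real) \<Rightarrow> real \<Rightarrow> real \<Rightarrow> real \<Rightarrow> (nat \<Rightarrow> real) \<Rightarrow> nat \<Rightarrow> real" where
  "heat n w r \<gamma> \<tau> v = (\<lambda>i. \<Sum>m. ((- \<tau>) ^ m / fact m) * ((Lop n w r \<gamma> ^^ m) v) i)"

definition okmbo_step :: "nat \<Rightarrow> (nat \<Rightarrow> nat \<Rightarrow> real) \<Rightarrow> real \<Rightarrow> real \<Rightarrow> real \<Rightarrow> nat set \<Rightarrow> nat set" where
  "okmbo_step n w r \<gamma> \<tau> S = {i \<in> {1..n}. heat n w r \<gamma> \<tau> (\<lambda>i. if i \<in> S then 1 else 0) i \<ge> 1/2}"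

end

theory Submission
  imports Defs "HOL-Library.Indicator_Function" "Jordan_Normal_Form.Determinant"
begin

text \<open>Write \<open>\<langle>f, g\<rangle> = \<Sum>i. d\<^sub>i\<^sup>r f i g i\<close> and \<open>P = exp (-\<tau> L)\<close>. The operator \<open>L\<close> is
  self-adjoint for this inner product: \<open>\<langle>\<Delta>u, v\<rangle>\<close> is the Dirichlet form of \<open>u, v\<close> and
  \<open>\<langle>\<phi>(u), v\<rangle>\<close> the Dirichlet form of the potentials \<open>\<phi>(v), \<phi>(u)\<close>. Hence \<open>P = exp (-\<tau> L / 2)\<^sup>2\<close>
  is positive semidefinite, and the Lyapunov functional \<open>J u = \<langle>1 - u, P u\<rangle>\<close> satisfies
  \<open>J \<chi>\<^sub>S - J \<chi>\<^sub>T \<ge> \<Sum>i. d\<^sub>i\<^sup>r (\<chi>\<^sub>S i - \<chi>\<^sub>T i) (1 - 2 (P \<chi>\<^sub>S) i)\<close> for all \<open>S, T\<close>. When \<open>T\<close> is the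
  thresholded set every term of the sum is nonnegative, so \<open>J\<close> never increases along the scheme
  and stays equal only if \<open>S \<subseteq> T\<close>. Some set repeats since \<open>V\<close> has finitely many subsets; along
  the cycle \<open>J\<close> is constant, so the sets increase and therefore coincide, and the repeated set is a
  fixed point.\<close>

section \<open>Linear operators on functions on the vertex set\<close>

locale vertex_functions =
  fixes n :: nat
begin

abbreviation V :: "nat set" where "V \<equiv> {1..n}"

text \<open>Vertex functions are total functions on \<^typ>\<open>nat\<close>; an operator is linear in this sense
  when it induces a linear map on \<open>V \<rightarrow> \<real>\<close>, so in particular \<open>F u\<close> on \<open>V\<close> only depends on \<open>u\<close> on \<open>V\<close>.\<close>
definition lin_on_V :: "((nat \<Rightarrow> real) \<Rightarrow> nat \<Rightarrow> real) \<Rightarrow> bool" where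
  "lin_on_V F \<longleftrightarrow> (\<forall>u u' v a b. (\<forall>i\<in>V. u' i = a * u i + b * v i)
                     \<longrightarrow> (\<forall>i\<in>V. F u' i = a * F u i + b * F v i))"

lemma lin_on_VD:
  "lin_on_V F \<Longrightarrow> (\<forall>i\<in>V. u' i = a * u i + b * v i) \<Longrightarrow> i \<in> V \<Longrightarrow> F u' i = a * F u i + b * F v i"
  unfolding lin_on_V_def by blast

lemma lin_on_V_cong:
  assumes "lin_on_V F" "\<forall>i\<in>V. u' i = u i" "i \<in> V"
  shows "F u' i = F u i"
proof -
  have "F u' i = 1 * F u i + 0 * F u i"
    by (rule lin_on_VD[OF assms(1) _ assms(3)]) (use assms(2) in simp)
  then show ?thesis by simp
qed

lemma lin_on_V_compose:
  assumes "lin_on_V F" "lin_on_V G"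
  shows "lin_on_V (\<lambda>u. F (G u))"
  unfolding lin_on_V_def
proof (intro allI impI ballI)
  fix u u' v :: "nat \<Rightarrow> real" and a b :: real and i
  assume "\<forall>i\<in>V. u' i = a * u i + b * v i" and i: "i \<in> V"
  then have "\<forall>i\<in>V. G u' i = a * G u i + b * G v i"
    using lin_on_VD[OF assms(2)] by blast
  then show "F (G u') i = a * F (G u) i + b * F (G v) i"
    using lin_on_VD[OF assms(1) _ i] by blast
qed

lemma lin_on_V_funpow: "lin_on_V F \<Longrightarrow> lin_on_V (F ^^ m)"
proof (induction m)
  case 0
  then show ?case unfolding lin_on_V_def by simp
next
  case (Suc m)
  then show ?case using lin_on_V_compose[of F "F ^^ m"] by simp
qed

definition unit_fun :: "nat \<Rightarrow> nat \<Rightarrow> real" where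
  "unit_fun j = (\<lambda>k. if k = j then 1 else 0)"

lemma lin_on_V_expansion:
  assumes F: "lin_on_V F" and i: "i \<in> V"
  shows "F u i = (\<Sum>j\<in>V. u j * F (unit_fun j) i)"
proof -
  have "\<forall>i\<in>V. F (\<lambda>k. \<Sum>j\<in>A. u j * unit_fun j k) i = (\<Sum>j\<in>A. u j * F (unit_fun j) i)"
    if "finite A" for A
    using that
  proof (induction A rule: finite_induct)
    case empty
    have "\<forall>i\<in>V. F (\<lambda>k. 0) i = 0 * F u i + 0 * F u i"
      using lin_on_VD[OF F, of "\<lambda>k. 0" 0 u 0 u] by simp
    then show ?case by simp
  next
    case (insert j A)
    have "\<forall>i\<in>V. (\<Sum>j\<in>insert j A. u j * unit_fun j i) = 1 * (\<Sum>j\<in>A. u j * unit_fun j i) + u j * unit_fun j i"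
      using insert by simp
    then have "\<forall>i\<in>V. F (\<lambda>k. \<Sum>j\<in>insert j A. u j * unit_fun j k) i
        = 1 * F (\<lambda>k. \<Sum>j\<in>A. u j * unit_fun j k) i + u j * F (unit_fun j) i"
      by (intro ballI lin_on_VD[OF F]) auto
    then show ?case using insert by simp
  qed
  then have "F (\<lambda>k. \<Sum>j\<in>V. u j * unit_fun j k) i = (\<Sum>j\<in>V. u j * F (unit_fun j) i)"
    using i by auto
  moreover have "F (\<lambda>k. \<Sum>j\<in>V. u j * unit_fun j k) i = F u i"
    by (rule lin_on_V_cong[OF F _ i]) (simp add: unit_fun_def if_distrib cong: if_cong)
  ultimately show ?thesis by simp
qed

definition l1norm :: "(nat \<Rightarrow> real) \<Rightarrow> real" where
  "l1norm u = (\<Sum>i\<in>V. \<bar>u i\<bar>)"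

lemma abs_le_l1norm: "i \<in> V \<Longrightarrow> \<bar>u i\<bar> \<le> l1norm u"
  unfolding l1norm_def by (rule member_le_sum[where f = "\<lambda>i. \<bar>u i\<bar>"]) auto

lemma lin_on_V_bounded:
  assumes F: "lin_on_V F"
  obtains C where "C \<ge> 0" "\<And>u. l1norm (F u) \<le> C * l1norm u"
proof
  define C where "C = (\<Sum>j\<in>V. \<Sum>i\<in>V. \<bar>F (unit_fun j) i\<bar>)"
  show "C \<ge> 0" unfolding C_def by (intro sum_nonneg) auto
  fix u
  have "l1norm (F u) = (\<Sum>i\<in>V. \<bar>\<Sum>j\<in>V. u j * F (unit_fun j) i\<bar>)"
    unfolding l1norm_def using lin_on_V_expansion[OF F] by (intro sum.cong) auto
  also have "\<dots> \<le> (\<Sum>i\<in>V. \<Sum>j\<in>V. \<bar>u j\<bar> * \<bar>F (unit_fun j) i\<bar>)"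
    by (intro sum_mono order.trans[OF sum_abs]) (simp add: abs_mult)
  also have "\<dots> = (\<Sum>j\<in>V. \<bar>u j\<bar> * (\<Sum>i\<in>V. \<bar>F (unit_fun j) i\<bar>))"
    by (subst sum.swap) (simp add: sum_distrib_left)
  also have "\<dots> \<le> (\<Sum>j\<in>V. \<bar>u j\<bar> * C)"
    unfolding C_def
    by (intro sum_mono mult_left_mono member_le_sum[where f = "\<lambda>j. \<Sum>i\<in>V. \<bar>F (unit_fun j) i\<bar>"])
       (auto intro: sum_nonneg)
  also have "\<dots> = C * l1norm u"
    unfolding l1norm_def sum_distrib_left by (simp add: mult.commute)
  finally show "l1norm (F u) \<le> C * l1norm u" .
qed

text \<open>Vertex \<open>k \<in> V\<close> corresponds to the coordinate \<open>k - 1\<close> of a vector of dimension \<open>n\<close>.\<close>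
definition fun_of_vec :: "real vec \<Rightarrow> nat \<Rightarrow> real" where
  "fun_of_vec x = (\<lambda>k. if k \<in> V then x $ (k - 1) else 0)"

definition matrix_of :: "((nat \<Rightarrow> real) \<Rightarrow> nat \<Rightarrow> real) \<Rightarrow> real mat" where
  "matrix_of F = mat n n (\<lambda>(i, j). F (unit_fun (Suc j)) (Suc i))"

lemma matrix_of_carrier: "matrix_of F \<in> carrier_mat n n"
  by (simp add: matrix_of_def)

lemma matrix_of_mult_vec:
  assumes F: "lin_on_V F" and x: "x \<in> carrier_vec n" and i: "i < n"
  shows "(matrix_of F *\<^sub>v x) $ i = F (fun_of_vec x) (Suc i)"
proof -
  have "(matrix_of F *\<^sub>v x) $ i = (\<Sum>j<n. F (unit_fun (Suc j)) (Suc i) * x $ j)"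
    using x i by (simp add: matrix_of_def scalar_prod_def atLeast0LessThan)
  also have "\<dots> = (\<Sum>j<n. fun_of_vec x (Suc j) * F (unit_fun (Suc j)) (Suc i))"
    by (intro sum.cong) (auto simp: fun_of_vec_def)
  also have "\<dots> = (\<Sum>j\<in>V. fun_of_vec x j * F (unit_fun j) (Suc i))"
    by (simp add: sum.atLeast1_atMost_eq)
  also have "\<dots> = F (fun_of_vec x) (Suc i)"
    using lin_on_V_expansion[OF F, of "Suc i" "fun_of_vec x"] i by simp
  finally show ?thesis .
qed

lemma lin_on_V_inj_imp_det_nonzero:
  assumes F: "lin_on_V F" and inj: "\<And>\<phi>. \<forall>i\<in>V. F \<phi> i = 0 \<Longrightarrow> \<forall>i\<in>V. \<phi> i = 0"
  shows "det (matrix_of F) \<noteq> 0"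
proof
  assume "det (matrix_of F) = 0"
  then obtain x where x: "x \<in> carrier_vec n" "x \<noteq> 0\<^sub>v n" "matrix_of F *\<^sub>v x = 0\<^sub>v n"
    using det_0_iff_vec_prod_zero_field[OF matrix_of_carrier] by auto
  have "\<forall>k\<in>V. F (fun_of_vec x) k = 0"
  proof
    fix k assume k: "k \<in> V"
    then have "F (fun_of_vec x) k = (matrix_of F *\<^sub>v x) $ (k - 1)"
      using matrix_of_mult_vec[OF F x(1), of "k - 1"] by auto
    then show "F (fun_of_vec x) k = 0"
      using x(3) k by auto
  qed
  then have "\<forall>k\<in>V. fun_of_vec x k = 0"
    by (rule inj)
  have "x = 0\<^sub>v n"
  proof (rule eq_vecI)
    fix j assume "j < dim_vec (0\<^sub>v n :: real vec)"
    then have j: "j < n" by simp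
    have "fun_of_vec x (Suc j) = 0" using \<open>\<forall>k\<in>V. fun_of_vec x k = 0\<close> j by auto
    then show "x $ j = 0\<^sub>v n $ j" using j by (simp add: fun_of_vec_def)
  qed (use x(1) in simp)
  with x(2) show False by simp
qed

lemma lin_on_V_inj_imp_surj:
  assumes F: "lin_on_V F" and inj: "\<And>\<phi>. \<forall>i\<in>V. F \<phi> i = 0 \<Longrightarrow> \<forall>i\<in>V. \<phi> i = 0"
  obtains \<phi> where "\<forall>i\<in>V. F \<phi> i = f i" "\<forall>i. i \<notin> V \<longrightarrow> \<phi> i = 0"
proof -
  let ?A = "matrix_of F"
  have "?A \<in> Units (ring_mat TYPE(real) n ())"
    by (rule det_non_zero_imp_unit[OF matrix_of_carrier lin_on_V_inj_imp_det_nonzero[OF F inj]])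
  then obtain B where B: "B \<in> carrier_mat n n" "?A * B = 1\<^sub>m n"
    by (auto simp: Units_def ring_mat_def)
  define b where "b = vec n (\<lambda>i. f (Suc i))"
  define x where "x = B *\<^sub>v b"
  have x: "x \<in> carrier_vec n"
    using B by (simp add: x_def b_def)
  have "?A *\<^sub>v x = (?A * B) *\<^sub>v b"
    by (subst assoc_mult_mat_vec[OF matrix_of_carrier B(1)]) (auto simp: x_def b_def)
  then have Ax: "?A *\<^sub>v x = b"
    using B by (simp add: b_def)
  show ?thesis
  proof
    show "\<forall>k\<in>V. F (fun_of_vec x) k = f k"
    proof
      fix k assume k: "k \<in> V"
      then have "k - 1 < n" "Suc (k - 1) = k" by auto
      then show "F (fun_of_vec x) k = f k"
        using matrix_of_mult_vec[OF F x, of "k - 1"] by (simp add: Ax b_def)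
    qed
  qed (simp add: fun_of_vec_def)
qed

end

section \<open>The graph Laplacian\<close>

locale weighted_graph = vertex_functions n for n +
  fixes w :: "nat \<Rightarrow> nat \<Rightarrow> real"
  assumes wgraph: "wgraph n w"
begin

lemma two_le_n: "2 \<le> n"
  and weight_sym: "i \<in> V \<Longrightarrow> j \<in> V \<Longrightarrow> w i j = w j i"
  and weight_nonneg: "i \<in> V \<Longrightarrow> j \<in> V \<Longrightarrow> w i j \<ge> 0"
  and vertices_connected: "i \<in> V \<Longrightarrow> j \<in> V \<Longrightarrow> (i, j) \<in> (edge_rel n w)\<^sup>*"
  using wgraph unfolding wgraph_def by auto

lemma one_in_V: "1 \<in> V"
  using two_le_n by simp

text \<open>Connectedness and \<open>n \<ge> 2\<close> give every vertex a neighbour, hence positive degree.\<close>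
lemma deg_pos:
  assumes i: "i \<in> V"
  shows "deg n w i > 0"
proof -
  define j where "j = (if i = 1 then 2 else (1::nat))"
  have j: "j \<in> V" "j \<noteq> i"
    using two_le_n i by (auto simp: j_def)
  from vertices_connected[OF i j(1)] j(2) obtain k where "(i, k) \<in> edge_rel n w"
    by (metis converse_rtranclE)
  then have k: "k \<in> V" "w i k > 0"
    by (auto simp: edge_rel_def)
  have "w i k \<le> deg n w i"
    unfolding deg_def using k i weight_nonneg by (intro member_le_sum) auto
  then show ?thesis using k by linarith
qed

definition dirichlet :: "(nat \<Rightarrow> real) \<Rightarrow> (nat \<Rightarrow> real) \<Rightarrow> real" where
  "dirichlet u v = (\<Sum>i\<in>V. \<Sum>j\<in>V. w i j * (u i - u j) * v i)"

lemma dirichlet_eq_half_sum: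
  "dirichlet u v = (\<Sum>i\<in>V. \<Sum>j\<in>V. w i j * (u i - u j) * (v i - v j)) / 2"
proof -
  have "dirichlet u v = (\<Sum>i\<in>V. \<Sum>j\<in>V. w j i * (u j - u i) * v j)"
    unfolding dirichlet_def by (rule sum.swap)
  also have "\<dots> = (\<Sum>i\<in>V. \<Sum>j\<in>V. - (w i j * (u i - u j) * v j))"
    by (intro sum.cong refl) (simp add: weight_sym algebra_simps)
  finally have "dirichlet u v = - (\<Sum>i\<in>V. \<Sum>j\<in>V. w i j * (u i - u j) * v j)"
    by (simp add: sum_negf)
  then have "2 * dirichlet u v = dirichlet u v - (\<Sum>i\<in>V. \<Sum>j\<in>V. w i j * (u i - u j) * v j)"
    by simp
  also have "\<dots> = (\<Sum>i\<in>V. \<Sum>j\<in>V. w i j * (u i - u j) * (v i - v j))"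
    unfolding dirichlet_def by (simp add: sum_subtractf[symmetric] algebra_simps)
  finally show ?thesis by simp
qed

lemma dirichlet_sym: "dirichlet u v = dirichlet v u"
  unfolding dirichlet_eq_half_sum by (simp add: algebra_simps)

lemma dirichlet_const: "dirichlet (\<lambda>_. c) v = 0"
  unfolding dirichlet_def by simp

lemma dirichlet_self_eq_0_imp_edge_eq:
  assumes "dirichlet u u = 0" "i \<in> V" "j \<in> V" "w i j > 0"
  shows "u i = u j"
proof -
  have nonneg: "0 \<le> w i j * (u i - u j) * (u i - u j)" if "i \<in> V" "j \<in> V" for i j
    using mult_nonneg_nonneg[OF weight_nonneg[OF that] zero_le_square[of "u i - u j"]]
    by (simp add: mult.assoc)
  have "(\<Sum>i\<in>V. \<Sum>j\<in>V. w i j * (u i - u j) * (u i - u j)) = 0"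
    using assms(1) dirichlet_eq_half_sum by simp
  then have "(\<Sum>j\<in>V. w i j * (u i - u j) * (u i - u j)) = 0"
    using nonneg assms(2) by (subst (asm) sum_nonneg_eq_0_iff) (auto intro!: sum_nonneg)
  then have "w i j * (u i - u j) * (u i - u j) = 0"
    using nonneg assms(2,3) by (subst (asm) sum_nonneg_eq_0_iff) auto
  then show ?thesis using assms(4) by simp
qed

lemma dirichlet_self_eq_0_imp_const:
  assumes "dirichlet u u = 0" "i \<in> V" "j \<in> V"
  shows "u i = u j"
  using vertices_connected[OF assms(2,3)]
proof (induction rule: rtrancl_induct)
  case (step y z)
  then show ?case
    using dirichlet_self_eq_0_imp_edge_eq[OF assms(1)] by (auto simp: edge_rel_def)
qed simp

end

locale graph_operator = weighted_graph n w for n w +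
  fixes r \<gamma> :: real
begin

definition mu :: "nat \<Rightarrow> real" where
  "mu i = deg n w i powr r"

definition mu_total :: real where
  "mu_total = (\<Sum>j\<in>V. mu j)"

lemma mu_pos: "i \<in> V \<Longrightarrow> mu i > 0"
  using deg_pos[of i] by (simp add: mu_def)

lemma mu_mult_deg_powr: "i \<in> V \<Longrightarrow> mu i * deg n w i powr (-r) = 1"
  using deg_pos[of i] by (simp add: mu_def powr_minus field_simps)

lemma mu_total_pos: "mu_total > 0"
  unfolding mu_total_def using mu_pos two_le_n by (intro sum_pos) auto

lemma gmass_eq: "gmass n w r u = (\<Sum>i\<in>V. mu i * u i)"
  by (simp add: gmass_def mu_def)

lemma gavg_eq: "i \<in> V \<Longrightarrow> gavg n w r u i = gmass n w r u / mu_total"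
  by (simp add: gavg_def mu_total_def mu_def)

lemma sum_mu_const: "\<forall>i\<in>V. u i = c \<Longrightarrow> (\<Sum>i\<in>V. mu i * u i) = mu_total * c"
  by (simp add: mu_total_def sum_distrib_right)

definition inner_mu :: "(nat \<Rightarrow> real) \<Rightarrow> (nat \<Rightarrow> real) \<Rightarrow> real" where
  "inner_mu u v = (\<Sum>i\<in>V. mu i * u i * v i)"

lemma inner_mu_commute: "inner_mu u v = inner_mu v u"
  unfolding inner_mu_def by (simp add: algebra_simps)

lemma inner_mu_glap: "inner_mu (glap n w r u) v = dirichlet u v"
  unfolding inner_mu_def dirichlet_def
proof (intro sum.cong refl)
  fix i assume i: "i \<in> V"
  have "mu i * glap n w r u i * v i
      = (mu i * deg n w i powr (-r)) * (\<Sum>j\<in>V. w i j * (u i - u j)) * v i"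
    unfolding glap_def by (simp add: algebra_simps)
  also have "\<dots> = (\<Sum>j\<in>V. w i j * (u i - u j) * v i)"
    using mu_mult_deg_powr[OF i] by (simp add: sum_distrib_right)
  finally show "mu i * glap n w r u i * v i = (\<Sum>j\<in>V. w i j * (u i - u j) * v i)" .
qed

lemma glap_eq_0_imp_const:
  assumes "\<forall>i\<in>V. glap n w r u i = 0" "i \<in> V"
  shows "u i = u 1"
proof (rule dirichlet_self_eq_0_imp_const[OF _ assms(2) one_in_V])
  show "dirichlet u u = 0"
    unfolding inner_mu_glap[symmetric] inner_mu_def using assms(1) by simp
qed

lemma glap_lincomb:
  assumes "\<forall>i\<in>V. u' i = a * u i + b * v i" "i \<in> V"
  shows "glap n w r u' i = a * glap n w r u i + b * glap n w r v i"
proof -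
  have "(\<Sum>j\<in>V. w i j * (u' i - u' j))
      = (\<Sum>j\<in>V. a * (w i j * (u i - u j)) + b * (w i j * (v i - v j)))"
    using assms by (intro sum.cong) (auto simp: algebra_simps)
  also have "\<dots> = a * (\<Sum>j\<in>V. w i j * (u i - u j)) + b * (\<Sum>j\<in>V. w i j * (v i - v j))"
    by (simp add: sum.distrib sum_distrib_left)
  finally show ?thesis
    unfolding glap_def by (simp only: distrib_left mult.left_commute)
qed

lemma gmass_lincomb:
  assumes "\<forall>i\<in>V. u' i = a * u i + b * v i"
  shows "gmass n w r u' = a * gmass n w r u + b * gmass n w r v"
proof -
  have "(\<Sum>i\<in>V. mu i * u' i) = (\<Sum>i\<in>V. a * (mu i * u i) + b * (mu i * v i))"
    using assms by (intro sum.cong) (auto simp: algebra_simps)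
  then show ?thesis
    unfolding gmass_eq by (simp add: sum.distrib sum_distrib_left)
qed

lemma glap_const: "glap n w r (\<lambda>_. c) = (\<lambda>_. 0)"
  by (simp add: glap_def fun_eq_iff)

section \<open>The potential\<close>

definition is_potential :: "(nat \<Rightarrow> real) \<Rightarrow> (nat \<Rightarrow> real) \<Rightarrow> bool" where
  "is_potential u \<phi> \<longleftrightarrow> (\<forall>i\<in>V. glap n w r \<phi> i = u i - gavg n w r u i)
      \<and> gmass n w r \<phi> = 0 \<and> (\<forall>i. i \<notin> V \<longrightarrow> \<phi> i = 0)"

lemma gpot_def': "gpot n w r u = (THE \<phi>. is_potential u \<phi>)"
  by (simp add: gpot_def is_potential_def)

lemma is_potential_unique:
  assumes "is_potential u \<phi>" "is_potential u \<psi>"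
  shows "\<phi> = \<psi>"
proof -
  define z where "z = (\<lambda>i. \<phi> i - \<psi> i)"
  have z_lincomb: "\<forall>i\<in>V. z i = 1 * \<phi> i + (-1) * \<psi> i"
    by (simp add: z_def)
  have "\<forall>i\<in>V. glap n w r z i = 0"
    using assms glap_lincomb[OF z_lincomb] by (simp add: is_potential_def)
  then have z_const: "\<forall>i\<in>V. z i = z 1"
    using glap_eq_0_imp_const by blast
  have "0 = (\<Sum>i\<in>V. mu i * z i)"
    using gmass_lincomb[OF z_lincomb] assms by (simp add: is_potential_def gmass_eq)
  also have "\<dots> = mu_total * z 1"
    by (rule sum_mu_const[OF z_const])
  finally have "z 1 = 0"
    using mu_total_pos by simp
  show ?thesis
  proof
    fix i
    show "\<phi> i = \<psi> i"
      using assms z_const \<open>z 1 = 0\<close> by (cases "i \<in> V") (auto simp: z_def is_potential_def)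
  qed
qed

text \<open>The constants span the kernel of \<open>\<Delta>\<close>, and adding the mean term removes exactly that
  kernel: this operator is invertible and its inverse produces the potential.\<close>
definition grounded_glap :: "(nat \<Rightarrow> real) \<Rightarrow> nat \<Rightarrow> real" where
  "grounded_glap \<phi> i = glap n w r \<phi> i + gmass n w r \<phi> / mu_total"

lemma lin_on_V_grounded_glap: "lin_on_V grounded_glap"
  unfolding lin_on_V_def
proof (intro allI impI ballI)
  fix u u' v :: "nat \<Rightarrow> real" and a b :: real and i
  assume h: "\<forall>i\<in>V. u' i = a * u i + b * v i" and i: "i \<in> V"
  show "grounded_glap u' i = a * grounded_glap u i + b * grounded_glap v i"
    unfolding grounded_glap_def glap_lincomb[OF h i] gmass_lincomb[OF h]
    using mu_total_pos by (simp add: field_simps)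
qed

lemma mass_grounded_glap: "(\<Sum>i\<in>V. mu i * grounded_glap \<phi> i) = gmass n w r \<phi>"
proof -
  have "(\<Sum>i\<in>V. mu i * glap n w r \<phi> i) = 0"
    using inner_mu_glap[of \<phi> "\<lambda>_. 1"] dirichlet_sym dirichlet_const
    unfolding inner_mu_def by simp
  moreover have "(\<Sum>i\<in>V. mu i * grounded_glap \<phi> i)
      = (\<Sum>i\<in>V. mu i * glap n w r \<phi> i) + mu_total * (gmass n w r \<phi> / mu_total)"
    unfolding grounded_glap_def mu_total_def by (simp only: distrib_left sum.distrib sum_distrib_right)
  ultimately show ?thesis
    using mu_total_pos by simp
qed

lemma grounded_glap_inj:
  assumes "\<forall>i\<in>V. grounded_glap \<phi> i = 0"
  shows "\<forall>i\<in>V. \<phi> i = 0"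
proof -
  have mass: "gmass n w r \<phi> = 0"
    using mass_grounded_glap[of \<phi>] assms by simp
  then have "\<forall>i\<in>V. glap n w r \<phi> i = 0"
    using assms by (simp add: grounded_glap_def)
  then have const: "\<forall>i\<in>V. \<phi> i = \<phi> 1"
    using glap_eq_0_imp_const by blast
  have "0 = mu_total * \<phi> 1"
    using mass sum_mu_const[OF const] by (simp add: gmass_eq)
  then show ?thesis
    using const mu_total_pos by simp
qed

lemma is_potential_exists: "\<exists>\<phi>. is_potential u \<phi>"
proof -
  obtain \<phi> where \<phi>: "\<forall>i\<in>V. grounded_glap \<phi> i = u i - gavg n w r u i" "\<forall>i. i \<notin> V \<longrightarrow> \<phi> i = 0"
    by (rule lin_on_V_inj_imp_surj[OF lin_on_V_grounded_glap grounded_glap_inj,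
        where f = "\<lambda>i. u i - gavg n w r u i"])
  have "gmass n w r \<phi> = (\<Sum>i\<in>V. mu i * (u i - gavg n w r u i))"
    using mass_grounded_glap[of \<phi>] \<phi>(1) by simp
  also have "\<dots> = (\<Sum>i\<in>V. mu i * u i) - (\<Sum>i\<in>V. mu i) * (gmass n w r u / mu_total)"
    by (simp add: gavg_eq right_diff_distrib sum_subtractf sum_distrib_right sum_divide_distrib)
  also have "\<dots> = 0"
    using mu_total_pos unfolding mu_total_def by (simp add: gmass_eq)
  finally have mass: "gmass n w r \<phi> = 0" .
  then have "is_potential u \<phi>"
    using \<phi> by (simp add: is_potential_def grounded_glap_def)
  then show ?thesis by blast
qed

lemma is_potential_gpot: "is_potential u (gpot n w r u)"
  unfolding gpot_def' using is_potential_exists is_potential_unique by (metis theI')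

lemma gpot_eqI: "is_potential u \<phi> \<Longrightarrow> gpot n w r u = \<phi>"
  using is_potential_unique is_potential_gpot by blast

lemma gpot_const: "gpot n w r (\<lambda>_. c) = (\<lambda>_. 0)"
proof (rule gpot_eqI)
  have "gmass n w r (\<lambda>_. c) = mu_total * c"
    unfolding gmass_eq by (rule sum_mu_const) simp
  then show "is_potential (\<lambda>_. c) (\<lambda>_. 0)"
    using mu_total_pos by (simp add: is_potential_def glap_const gavg_eq gmass_eq)
qed

lemma lin_on_V_gpot: "lin_on_V (gpot n w r)"
  unfolding lin_on_V_def
proof (intro allI impI)
  fix u u' v :: "nat \<Rightarrow> real" and a b :: real
  assume h: "\<forall>i\<in>V. u' i = a * u i + b * v i"
  define \<phi> where "\<phi> = (\<lambda>i. a * gpot n w r u i + b * gpot n w r v i)"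
  have \<phi>_lincomb: "\<forall>i\<in>V. \<phi> i = a * gpot n w r u i + b * gpot n w r v i"
    by (simp add: \<phi>_def)
  have pu: "is_potential u (gpot n w r u)" and pv: "is_potential v (gpot n w r v)"
    by (rule is_potential_gpot)+
  have "is_potential u' \<phi>"
    unfolding is_potential_def
  proof (intro conjI ballI allI impI)
    fix k assume k: "k \<in> V"
    have "glap n w r \<phi> k = a * glap n w r (gpot n w r u) k + b * glap n w r (gpot n w r v) k"
      by (rule glap_lincomb[OF \<phi>_lincomb k])
    also have "\<dots> = a * (u k - gavg n w r u k) + b * (v k - gavg n w r v k)"
      using pu pv k by (simp add: is_potential_def)
    also have "\<dots> = u' k - gavg n w r u' k"
      using h k gmass_lincomb[OF h] mu_total_pos by (simp add: gavg_eq field_simps)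
    finally show "glap n w r \<phi> k = u' k - gavg n w r u' k" .
  next
    show "gmass n w r \<phi> = 0"
      using gmass_lincomb[OF \<phi>_lincomb] pu pv by (simp add: is_potential_def)
  next
    fix k assume "k \<notin> V"
    then show "\<phi> k = 0"
      using pu pv by (simp add: is_potential_def \<phi>_def)
  qed
  then show "\<forall>i\<in>V. gpot n w r u' i = a * gpot n w r u i + b * gpot n w r v i"
    by (simp add: gpot_eqI \<phi>_def)
qed

lemma glap_gpot: "i \<in> V \<Longrightarrow> glap n w r (gpot n w r v) i = v i - gmass n w r v / mu_total"
  using is_potential_gpot[of v] by (simp add: is_potential_def gavg_eq)

lemma gmass_gpot: "gmass n w r (gpot n w r v) = 0"
  using is_potential_gpot[of v] by (simp add: is_potential_def)

section \<open>The operator \<open>L\<close> and its heat semigroup\<close>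

abbreviation L :: "(nat \<Rightarrow> real) \<Rightarrow> nat \<Rightarrow> real" where
  "L \<equiv> Lop n w r \<gamma>"

abbreviation H :: "real \<Rightarrow> (nat \<Rightarrow> real) \<Rightarrow> nat \<Rightarrow> real" where
  "H t \<equiv> heat n w r \<gamma> t"

lemma lin_on_V_Lop: "lin_on_V L"
  unfolding lin_on_V_def
proof (intro allI impI ballI)
  fix u u' v :: "nat \<Rightarrow> real" and a b :: real and i
  assume h: "\<forall>i\<in>V. u' i = a * u i + b * v i" and i: "i \<in> V"
  show "L u' i = a * L u i + b * L v i"
    unfolding Lop_def glap_lincomb[OF h i] lin_on_VD[OF lin_on_V_gpot h i]
    by (simp add: algebra_simps)
qed

lemma lin_on_V_Lop_pow: "lin_on_V (L ^^ m)"
  by (rule lin_on_V_funpow[OF lin_on_V_Lop])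

text \<open>Pairing with the potential is the Dirichlet form of the potentials, because
  \<open>v = \<Delta>(gpot v) + const\<close> and the potential has mass zero.\<close>
lemma inner_mu_gpot: "inner_mu (gpot n w r u) v = dirichlet (gpot n w r v) (gpot n w r u)"
proof -
  have "inner_mu (gpot n w r u) v
      = (\<Sum>i\<in>V. mu i * gpot n w r u i * (glap n w r (gpot n w r v) i + gmass n w r v / mu_total))"
    unfolding inner_mu_def using glap_gpot by (intro sum.cong) auto
  also have "\<dots> = inner_mu (gpot n w r u) (glap n w r (gpot n w r v))
      + gmass n w r (gpot n w r u) * (gmass n w r v / mu_total)"
    unfolding inner_mu_def gmass_eq by (simp only: distrib_left sum.distrib sum_distrib_right)
  also have "\<dots> = dirichlet (gpot n w r v) (gpot n w r u)"
    using gmass_gpot inner_mu_glap inner_mu_commute by simp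
  finally show ?thesis .
qed

lemma inner_mu_Lop: "inner_mu (L u) v = dirichlet u v + \<gamma> * dirichlet (gpot n w r v) (gpot n w r u)"
proof -
  have "inner_mu (L u) v = inner_mu (glap n w r u) v + \<gamma> * inner_mu (gpot n w r u) v"
    unfolding inner_mu_def Lop_def
    by (simp add: distrib_left distrib_right sum.distrib sum_distrib_left mult_ac)
  then show ?thesis
    using inner_mu_glap inner_mu_gpot by simp
qed

lemma Lop_self_adjoint: "inner_mu (L u) v = inner_mu u (L v)"
  using inner_mu_Lop[of u v] inner_mu_Lop[of v u] inner_mu_commute[of u "L v"] dirichlet_sym
  by metis

lemma inner_mu_Lop_pow: "inner_mu ((L ^^ a) u) ((L ^^ b) v) = inner_mu ((L ^^ (a + b)) u) v"
proof (induction b arbitrary: a)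
  case (Suc b)
  have "inner_mu ((L ^^ a) u) ((L ^^ Suc b) v) = inner_mu ((L ^^ Suc a) u) ((L ^^ b) v)"
    using Lop_self_adjoint by simp
  also have "\<dots> = inner_mu ((L ^^ (Suc a + b)) u) v"
    by (rule Suc.IH)
  finally show ?case by simp
qed simp

lemma inner_mu_Lop_pow_sym: "inner_mu ((L ^^ m) u) v = inner_mu ((L ^^ m) v) u"
  using inner_mu_Lop_pow[of 0 u m v] inner_mu_commute by simp

lemma Lop_const: "L (\<lambda>_. c) = (\<lambda>_. 0)"
  unfolding Lop_def gpot_const glap_const by simp

lemma Lop_pow_const: "(L ^^ Suc m) (\<lambda>_. c) = (\<lambda>_. 0)"
  by (induction m) (simp_all add: Lop_const)

lemma Lop_pow_bound:
  obtains C where "C \<ge> 0" "\<And>m u. l1norm ((L ^^ m) u) \<le> C ^ m * l1norm u"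
proof -
  obtain C where C: "C \<ge> 0" "\<And>u. l1norm (L u) \<le> C * l1norm u"
    using lin_on_V_bounded[OF lin_on_V_Lop] by blast
  have "l1norm ((L ^^ m) u) \<le> C ^ m * l1norm u" for m u
  proof (induction m)
    case (Suc m)
    have "l1norm ((L ^^ Suc m) u) \<le> C * l1norm ((L ^^ m) u)"
      using C(2) by simp
    also have "\<dots> \<le> C * (C ^ m * l1norm u)"
      by (rule mult_left_mono[OF Suc C(1)])
    finally show ?case by (simp add: mult.assoc)
  qed simp
  with C(1) show ?thesis by (rule that)
qed

lemma summable_norm_heat_series:
  assumes i: "i \<in> V"
  shows "summable (\<lambda>m. norm ((-t) ^ m / fact m * (L ^^ m) u i))"
proof -
  obtain C where C: "C \<ge> 0" "\<And>m u. l1norm ((L ^^ m) u) \<le> C ^ m * l1norm u"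
    using Lop_pow_bound by blast
  show ?thesis
  proof (rule summable_comparison_test'[where N = 0])
    show "summable (\<lambda>m. l1norm u * (inverse (fact m) * (\<bar>t\<bar> * C) ^ m))"
      by (intro summable_mult summable_exp)
    fix m :: nat
    have "norm (norm ((-t) ^ m / fact m * (L ^^ m) u i)) = \<bar>t\<bar> ^ m / fact m * \<bar>(L ^^ m) u i\<bar>"
      by (simp add: abs_mult power_abs)
    also have "\<dots> \<le> \<bar>t\<bar> ^ m / fact m * (C ^ m * l1norm u)"
      by (intro mult_left_mono order.trans[OF abs_le_l1norm[OF i] C(2)]) auto
    also have "\<dots> = l1norm u * (inverse (fact m) * (\<bar>t\<bar> * C) ^ m)"
      by (simp add: power_mult_distrib field_simps)
    finally show "norm (norm ((-t) ^ m / fact m * (L ^^ m) u i))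
        \<le> l1norm u * (inverse (fact m) * (\<bar>t\<bar> * C) ^ m)" .
  qed
qed

lemma summable_heat_series: "i \<in> V \<Longrightarrow> summable (\<lambda>m. (-t) ^ m / fact m * (L ^^ m) u i)"
  by (rule summable_norm_cancel[OF summable_norm_heat_series])

lemma lin_on_V_heat: "lin_on_V (H t)"
  unfolding lin_on_V_def
proof (intro allI impI ballI)
  fix u u' v :: "nat \<Rightarrow> real" and a b :: real and i
  assume h: "\<forall>i\<in>V. u' i = a * u i + b * v i" and i: "i \<in> V"
  define f where "f = (\<lambda>m. (-t) ^ m / fact m * (L ^^ m) u i)"
  define g where "g = (\<lambda>m. (-t) ^ m / fact m * (L ^^ m) v i)"
  have "(\<lambda>m. (-t) ^ m / fact m * (L ^^ m) u' i) = (\<lambda>m. a * f m + b * g m)"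
    using lin_on_VD[OF lin_on_V_Lop_pow h i] by (simp add: f_def g_def algebra_simps)
  moreover have "summable f" "summable g"
    unfolding f_def g_def by (rule summable_heat_series[OF i])+
  then have "(\<Sum>m. a * f m + b * g m) = a * suminf f + b * suminf g"
    by (simp add: suminf_add[symmetric] suminf_mult summable_mult)
  ultimately show "H t u' i = a * H t u i + b * H t v i"
    unfolding heat_def f_def g_def by simp
qed

lemma inner_mu_heat: "inner_mu (H t u) v = (\<Sum>m. (-t) ^ m / fact m * inner_mu ((L ^^ m) u) v)"
proof -
  have "inner_mu (H t u) v = (\<Sum>i\<in>V. \<Sum>m. (mu i * v i) * ((-t) ^ m / fact m * (L ^^ m) u i))"
    unfolding inner_mu_def heat_def
  proof (intro sum.cong refl)
    fix i assume i: "i \<in> V"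
    show "mu i * (\<Sum>m. (-t) ^ m / fact m * (L ^^ m) u i) * v i
        = (\<Sum>m. (mu i * v i) * ((-t) ^ m / fact m * (L ^^ m) u i))"
      using suminf_mult[OF summable_heat_series[OF i], of "mu i * v i"] by (simp add: algebra_simps)
  qed
  also have "\<dots> = (\<Sum>m. \<Sum>i\<in>V. (mu i * v i) * ((-t) ^ m / fact m * (L ^^ m) u i))"
    by (rule suminf_sum[symmetric], rule summable_mult, erule summable_heat_series)
  also have "\<dots> = (\<Sum>m. (-t) ^ m / fact m * inner_mu ((L ^^ m) u) v)"
    unfolding inner_mu_def by (intro arg_cong[where f = suminf] ext) (simp add: sum_distrib_left mult_ac)
  finally show ?thesis .
qed

lemma heat_sym: "inner_mu (H t u) v = inner_mu (H t v) u"
  unfolding inner_mu_heat using inner_mu_Lop_pow_sym by simp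

lemma heat_const: "H t (\<lambda>_. c) i = c"
proof -
  have "(\<lambda>m. (-t) ^ m / fact m * (L ^^ m) (\<lambda>_. c) i) = (\<lambda>m. if m = 0 then c else 0)"
  proof
    fix m
    show "(-t) ^ m / fact m * (L ^^ m) (\<lambda>_. c) i = (if m = 0 then c else 0)"
      by (cases m) (simp_all only: Lop_pow_const, simp_all)
  qed
  moreover have "(\<lambda>m. if m = 0 then c else 0 :: real) sums c"
    using sums_single[of 0 "\<lambda>_. c"] by simp
  ultimately show ?thesis
    unfolding heat_def by (simp add: sums_iff)
qed

text \<open>Pair with the constant \<open>1\<close>, which \<open>H t\<close> fixes, and use symmetry.\<close>
lemma heat_mass: "(\<Sum>i\<in>V. mu i * H t u i) = (\<Sum>i\<in>V. mu i * u i)"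
proof -
  have "inner_mu (H t (\<lambda>_. 1)) u = inner_mu (H t u) (\<lambda>_. 1)"
    by (rule heat_sym)
  then show ?thesis
    unfolding inner_mu_def heat_const by simp
qed

lemma exp_series_coeff_half:
  fixes t :: real
  shows "(\<Sum>j\<le>k. ((-(t/2)) ^ j / fact j) * ((-(t/2)) ^ (k-j) / fact (k-j))) = (-t) ^ k / fact k"
proof -
  have "((-(t/2)) + (-(t/2))) ^ k /\<^sub>R fact k
      = (\<Sum>j\<le>k. ((-(t/2)) ^ j /\<^sub>R fact j) * ((-(t/2)) ^ (k-j) /\<^sub>R fact (k-j)))"
    by (rule exp_series_add_commuting) simp
  moreover have "\<And>x c :: real. x /\<^sub>R c = x / c"
    by (simp add: divide_inverse mult.commute)
  ultimately show ?thesis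
    by (simp only:) simp
qed

lemma inner_mu_Cauchy_coeff:
  "(\<Sum>i\<in>V. mu i * (\<Sum>j\<le>k. ((-(t/2)) ^ j / fact j * (L ^^ j) u i)
                         * ((-(t/2)) ^ (k-j) / fact (k-j) * (L ^^ (k-j)) u i)))
    = (-t) ^ k / fact k * inner_mu ((L ^^ k) u) u"
proof -
  let ?c = "\<lambda>j. ((-(t/2)) ^ j / fact j) * ((-(t/2)) ^ (k-j) / fact (k-j))"
  have "(\<Sum>i\<in>V. mu i * (\<Sum>j\<le>k. ((-(t/2)) ^ j / fact j * (L ^^ j) u i)
                         * ((-(t/2)) ^ (k-j) / fact (k-j) * (L ^^ (k-j)) u i)))
      = (\<Sum>i\<in>V. \<Sum>j\<le>k. ?c j * (mu i * (L ^^ j) u i * (L ^^ (k-j)) u i))"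
    by (intro sum.cong refl) (simp add: sum_distrib_left mult_ac)
  also have "\<dots> = (\<Sum>j\<le>k. ?c j * inner_mu ((L ^^ j) u) ((L ^^ (k-j)) u))"
    unfolding inner_mu_def by (subst sum.swap) (simp only: sum_distrib_left)
  also have "\<dots> = (\<Sum>j\<le>k. ?c j * inner_mu ((L ^^ k) u) u)"
    by (intro sum.cong refl) (simp add: inner_mu_Lop_pow)
  also have "\<dots> = (-t) ^ k / fact k * inner_mu ((L ^^ k) u) u"
    by (simp only: sum_distrib_right[symmetric] exp_series_coeff_half)
  finally show ?thesis .
qed

text \<open>The semigroup law \<open>exp (-t L) = exp (-t L / 2)\<^sup>2\<close> combined with self-adjointness,
  proved on the series via the Cauchy product.\<close>
lemma inner_mu_heat_half: "inner_mu (H t u) u = inner_mu (H (t/2) u) (H (t/2) u)"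
proof -
  let ?a = "\<lambda>i m. (-(t/2)) ^ m / fact m * (L ^^ m) u i"
  let ?X = "\<lambda>i k. \<Sum>j\<le>k. ?a i j * ?a i (k - j)"
  have X: "(?X i) sums (H (t/2) u i * H (t/2) u i)" if i: "i \<in> V" for i
    unfolding heat_def by (rule Cauchy_product_sums) (rule summable_norm_heat_series[OF i])+
  have "inner_mu (H (t/2) u) (H (t/2) u) = (\<Sum>i\<in>V. \<Sum>k. mu i * ?X i k)"
    unfolding inner_mu_def
  proof (intro sum.cong refl)
    fix i assume i: "i \<in> V"
    show "mu i * H (t/2) u i * H (t/2) u i = (\<Sum>k. mu i * ?X i k)"
      using suminf_mult[OF sums_summable[OF X[OF i]], of "mu i"] sums_unique[OF X[OF i]]
      by (simp add: mult.assoc)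
  qed
  also have "\<dots> = (\<Sum>k. \<Sum>i\<in>V. mu i * ?X i k)"
    by (rule suminf_sum[symmetric], rule summable_mult, rule sums_summable, erule X)
  also have "\<dots> = (\<Sum>k. (-t) ^ k / fact k * inner_mu ((L ^^ k) u) u)"
    by (simp only: inner_mu_Cauchy_coeff)
  also have "\<dots> = inner_mu (H t u) u"
    by (rule inner_mu_heat[symmetric])
  finally show ?thesis ..
qed

lemma heat_nonneg: "inner_mu (H t u) u \<ge> 0"
proof -
  have "0 \<le> (\<Sum>i\<in>V. mu i * (H (t/2) u i * H (t/2) u i))"
    by (intro sum_nonneg mult_nonneg_nonneg[OF less_imp_le[OF mu_pos] zero_le_square]) simp
  then show ?thesis
    unfolding inner_mu_heat_half by (simp add: inner_mu_def mult.assoc)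
qed

section \<open>The Lyapunov functional of the scheme\<close>

definition lyapunov :: "real \<Rightarrow> (nat \<Rightarrow> real) \<Rightarrow> real" where
  "lyapunov t u = inner_mu (\<lambda>i. 1 - u i) (H t u)"

lemma lyapunov_diff:
  "lyapunov t u - lyapunov t v
    = inner_mu (H t (\<lambda>i. v i - u i)) (\<lambda>i. v i - u i)
      + (\<Sum>i\<in>V. mu i * (u i - v i) * (1 - 2 * H t u i))"
proof -
  define x where "x = H t u"
  define y where "y = H t v"
  have mass_x: "(\<Sum>i\<in>V. mu i * x i) = (\<Sum>i\<in>V. mu i * u i)"
    unfolding x_def by (rule heat_mass)
  have mass_y: "(\<Sum>i\<in>V. mu i * y i) = (\<Sum>i\<in>V. mu i * v i)"
    unfolding y_def by (rule heat_mass)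
  have sym: "(\<Sum>i\<in>V. mu i * x i * v i) = (\<Sum>i\<in>V. mu i * y i * u i)"
    using heat_sym[of t u v] unfolding inner_mu_def x_def y_def .
  have diff: "H t (\<lambda>i. v i - u i) i = y i - x i" if "i \<in> V" for i
    using lin_on_VD[OF lin_on_V_heat, of "\<lambda>i. v i - u i" 1 v "-1" u i] that
    unfolding x_def y_def by simp
  have pair_diff: "inner_mu (H t (\<lambda>i. v i - u i)) (\<lambda>i. v i - u i)
      = (\<Sum>i\<in>V. mu i * (y i - x i) * (v i - u i))"
    unfolding inner_mu_def by (intro sum.cong refl) (simp add: diff)
  have "lyapunov t u - lyapunov t v
      - inner_mu (H t (\<lambda>i. v i - u i)) (\<lambda>i. v i - u i)
      - (\<Sum>i\<in>V. mu i * (u i - v i) * (1 - 2 * H t u i))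
    = (\<Sum>i\<in>V. mu i * (1 - u i) * x i - mu i * (1 - v i) * y i
        - mu i * (y i - x i) * (v i - u i) - mu i * (u i - v i) * (1 - 2 * x i))"
    unfolding pair_diff unfolding lyapunov_def inner_mu_def x_def y_def
    by (simp only: sum_subtractf)
  also have "\<dots> = (\<Sum>i\<in>V. (mu i * x i - mu i * u i) - (mu i * y i - mu i * v i)
        - (mu i * x i * v i - mu i * y i * u i))"
    by (intro sum.cong refl) (simp add: algebra_simps)
  also have "\<dots> = 0"
    using mass_x mass_y sym by (simp only: sum_subtractf)
  finally show ?thesis by simp
qed

lemma okmbo_step_eq: "okmbo_step n w r \<gamma> t S = {i \<in> V. H t (indicator S) i \<ge> 1/2}"
proof -
  have "(\<lambda>i. if i \<in> S then 1 else 0) = (indicator S :: nat \<Rightarrow> real)"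
    by (simp add: fun_eq_iff indicator_def)
  then show ?thesis
    unfolding okmbo_step_def by simp
qed

lemma okmbo_step_subset: "okmbo_step n w r \<gamma> t S \<subseteq> V"
  unfolding okmbo_step_def by auto

text \<open>Thresholding at \<open>1/2\<close> is exactly what makes every term of the linear part of
  \<open>lyapunov_diff\<close> nonnegative.\<close>
lemma okmbo_step_term_nonneg:
  assumes "i \<in> V"
  shows "0 \<le> mu i * (indicator S i - indicator (okmbo_step n w r \<gamma> t S) i) * (1 - 2 * H t (indicator S) i)"
proof -
  have "0 \<le> (indicator S i - indicator (okmbo_step n w r \<gamma> t S) i) * (1 - 2 * H t (indicator S) i)"
    using assms by (auto simp: okmbo_step_eq indicator_def)
  then show ?thesis
    using mu_pos[OF assms] by (simp add: mult.assoc)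
qed

lemma okmbo_step_gap_nonneg:
  "0 \<le> (\<Sum>i\<in>V. mu i * (indicator S i - indicator (okmbo_step n w r \<gamma> t S) i) * (1 - 2 * H t (indicator S) i))"
  by (rule sum_nonneg) (rule okmbo_step_term_nonneg)

lemma lyapunov_okmbo_step_gap:
  "(\<Sum>i\<in>V. mu i * (indicator S i - indicator (okmbo_step n w r \<gamma> t S) i) * (1 - 2 * H t (indicator S) i))
    \<le> lyapunov t (indicator S) - lyapunov t (indicator (okmbo_step n w r \<gamma> t S))"
  using lyapunov_diff[of t "indicator S" "indicator (okmbo_step n w r \<gamma> t S)"] heat_nonneg
  by simp

lemma lyapunov_okmbo_step_le:
  "lyapunov t (indicator (okmbo_step n w r \<gamma> t S)) \<le> lyapunov t (indicator S)"
  using lyapunov_okmbo_step_gap[of S t] okmbo_step_gap_nonneg[of S t] by simp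

lemma lyapunov_okmbo_step_eq_imp_subset:
  assumes "S \<subseteq> V"
    and eq: "lyapunov t (indicator (okmbo_step n w r \<gamma> t S)) = lyapunov t (indicator S)"
  shows "S \<subseteq> okmbo_step n w r \<gamma> t S"
proof
  fix i assume "i \<in> S"
  with assms(1) have i: "i \<in> V" by auto
  have "(\<Sum>i\<in>V. mu i * (indicator S i - indicator (okmbo_step n w r \<gamma> t S) i)
      * (1 - 2 * H t (indicator S) i)) = 0"
    using lyapunov_okmbo_step_gap[of S t] eq okmbo_step_gap_nonneg[of S t] by simp
  then have "mu i * (indicator S i - indicator (okmbo_step n w r \<gamma> t S) i)
      * (1 - 2 * H t (indicator S) i) = 0"
    using okmbo_step_term_nonneg i by (subst (asm) sum_nonneg_eq_0_iff) auto
  show "i \<in> okmbo_step n w r \<gamma> t S"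
  proof (rule ccontr)
    assume "i \<notin> okmbo_step n w r \<gamma> t S"
    then have "H t (indicator S) i < 1/2"
      using i by (simp add: okmbo_step_eq)
    then have "0 < mu i * (indicator S i - indicator (okmbo_step n w r \<gamma> t S) i)
        * (1 - 2 * H t (indicator S) i)"
      using mu_pos[OF i] \<open>i \<in> S\<close> \<open>i \<notin> okmbo_step n w r \<gamma> t S\<close> by simp
    with \<open>mu i * _ * _ = 0\<close> show False by linarith
  qed
qed

end

section \<open>Eventual stationarity\<close>

lemma exists_repeat_finite_range:
  fixes S :: "nat \<Rightarrow> 'a"
  assumes "finite A" "\<And>k. S k \<in> A"
  obtains a b where "a < b" "S a = S b"
proof -
  have "\<not> inj_on S {..card A}"
  proof
    assume "inj_on S {..card A}"
    then have "card {..card A} \<le> card A"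
      using assms by (intro card_inj_on_le) auto
    then show False by simp
  qed
  then obtain a b where "a \<noteq> b" "S a = S b"
    unfolding inj_on_def by blast
  then show ?thesis
    using that by (cases "a < b") (auto simp: not_less_iff_gr_or_eq)
qed

text \<open>A repetition \<open>S a = S b\<close> forces \<open>J\<close> to be constant on \<open>a..b\<close>, so the orbit is
  increasing there and closes up; antisymmetry then gives \<open>S (Suc a) = S a\<close>.\<close>
lemma iteration_eventually_constant:
  fixes S :: "nat \<Rightarrow> 'a::order" and J :: "'a \<Rightarrow> real"
  assumes "finite A" "\<And>k. S k \<in> A"
    and iter: "\<And>k. S (Suc k) = F (S k)"
    and dec: "\<And>X. X \<in> A \<Longrightarrow> J (F X) \<le> J X"
    and flat: "\<And>X. X \<in> A \<Longrightarrow> J (F X) = J X \<Longrightarrow> X \<le> F X"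
  shows "\<exists>K. \<forall>k\<ge>K. S k = S K"
proof -
  obtain a b where ab: "a < b" "S a = S b"
    by (rule exists_repeat_finite_range[OF assms(1,2)])
  have dec_k: "J (S (Suc k)) \<le> J (S k)" for k
    using dec[OF assms(2)] iter by simp
  have J_mono: "J (S k) \<le> J (S j)" if "j \<le> k" for j k
    using that
  proof (induction k rule: dec_induct)
    case (step k)
    then show ?case using dec_k[of k] by linarith
  qed simp
  have incr: "S k \<le> S (Suc k)" if "a \<le> k" "k < b" for k
  proof -
    have "J (S b) \<le> J (S (Suc k))" "J (S k) \<le> J (S a)"
      using J_mono[of "Suc k" b] J_mono[of a k] that by auto
    then have "J (F (S k)) = J (S k)"
      using dec_k[of k] ab(2) iter[of k] by simp
    then show ?thesis
      using flat[OF assms(2)] iter[of k] by simp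
  qed
  have above: "S (Suc a) \<le> S k" if "Suc a \<le> k" "k \<le> b" for k
    using that
  proof (induction k rule: dec_induct)
    case (step k)
    then have "S (Suc a) \<le> S k" "S k \<le> S (Suc k)"
      using incr by simp_all
    then show ?case
      by (rule order.trans)
  qed simp
  have "S (Suc a) \<le> S a" "S a \<le> S (Suc a)"
    using above[of b] incr[of a] ab by simp_all
  then have fixed: "S (Suc a) = S a"
    by (rule order.antisym)
  have "S k = S a" if "a \<le> k" for k
    using that
  proof (induction k rule: dec_induct)
    case (step k)
    then show ?case using iter[of k] iter[of a] fixed by simp
  qed simp
  then show ?thesis by blast
qed

theorem corollary5p7:
  fixes n :: nat and w :: "nat \<Rightarrow> nat \<Rightarrow> real" and r \<gamma> \<tau> :: real
    and S :: "nat \<Rightarrow> nat set" and N :: enat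
  assumes "wgraph n w"
    and "0 \<le> r" and "r \<le> 1"
    and "\<gamma> \<ge> 0" and "\<tau> > 0"
    and "S 0 \<subseteq> {1..n}"
    and "\<forall>k. 1 \<le> k \<and> enat k \<le> N \<longrightarrow> S k = okmbo_step n w r \<gamma> \<tau> (S (k - 1))"
  shows "\<exists>K. enat K \<le> N \<and> (\<forall>k. K \<le> k \<and> enat k \<le> N \<longrightarrow> S k = S K)"
proof (cases N)
  case (enat M)
  then show ?thesis by (intro exI[of _ M]) auto
next
  case infinity
  interpret graph_operator n w r \<gamma>
    by unfold_locales (rule assms(1))
  have step: "S (Suc k) = okmbo_step n w r \<gamma> \<tau> (S k)" for k
    using assms(7) infinity by (metis diff_Suc_1 enat_ord_code(3) le_add1 plus_1_eq_Suc)
  have in_Pow: "S k \<in> Pow V" for k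
    using assms(6) step okmbo_step_subset by (cases k) auto
  have "\<exists>K. \<forall>k\<ge>K. S k = S K"
    by (rule iteration_eventually_constant[where A = "Pow V" and F = "okmbo_step n w r \<gamma> \<tau>"
          and J = "\<lambda>X. lyapunov \<tau> (indicator X)"])
      (use in_Pow step in \<open>simp_all add: lyapunov_okmbo_step_le lyapunov_okmbo_step_eq_imp_subset\<close>)
  then show ?thesis
    using infinity by auto
qed

end
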